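(* Fix an integer base $b \ge 2$ and a function $f_*:\{0,1,\dots,b-1\}\to\mathbb{Z}^{\ge 0}$ with $f_*(0)=0$, $f_*(1)=1$ and $\gcd(b,f_*(b-1))=1$. Let $f:\mathbb{Z}^{\ge 0}\to\mathbb{Z}^{\ge 0}$ be the associated digit map, $f\left(\sum_{i=0}^n a_i b^i\right)=\sum_{i=0}^n f_*(a_i)$, where $\sum_{i=0}^n a_ib^i$ is the base-$b$ representation ($0\le a_i\le b-1$). Suppose there is a digit $0\le m_*\le b-1$ such that $f(m_* )-m_*$ is relatively prime to $f(b-1)$. Then for any cycle number $u$ and any positive integer $n$, there exist $n$ consecutive positive integers that are all $u$-integers.
   Context: $f^r$ denotes the $r$-fold iterate of $f$. A cycle number is a positive integer $u$ with $f^r(u)=u$ for some $r\ge 1$. For a cycle number $u$, a positive integer $n$ is a $u$-integer if $f^r(n)=u$ for some $r\ge 1$. *)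

theory Defs
  imports Main
begin

fun digit_map :: "nat \<Rightarrow> (nat \<Rightarrow> nat) \<Rightarrow> nat \<Rightarrow> nat" where
  "digit_map b fs n = (if n = 0 \<or> b < 2 then 0 else fs (n mod b) + digit_map b fs (n div b))"

definition cycle_number :: "(nat \<Rightarrow> nat) \<Rightarrow> nat \<Rightarrow> bool" where
  "cycle_number f u \<longleftrightarrow> u > 0 \<and> (\<exists>r\<ge>1. (f ^^ r) u = u)"

definition u_integer :: "(nat \<Rightarrow> nat) \<Rightarrow> nat \<Rightarrow> nat \<Rightarrow> bool" where
  "u_integer f u n \<longleftrightarrow> n > 0 \<and> (\<exists>r\<ge>1. (f ^^ r) n = u)"

end

theory Submission
  imports Defs "HOL-Number_Theory.Number_Theory"
begin

text \<open>Every finite set \<open>C\<close> has a positive translate \<open>y + C\<close> consisting of \<open>u\<close>-integers.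
  Such a translate exists for \<open>C\<close> as soon as it exists for the image of \<open>C\<close> under a shift map
  \<open>x \<mapsto> f (x + d)\<close>: prefix \<open>x + d\<close> with digits whose image under \<open>f\<close> is the required
  translation.  Singletons have one because \<open>f\<close> attains every positive value at
  arbitrarily large arguments (so only \<open>u > 0\<close> is needed of the cycle number \<open>u\<close>).  By induction on \<open>card C\<close> it therefore
  suffices that any two numbers \<open>p < q\<close> are merged by two shift maps.  With \<open>D = q - p\<close> and
  \<open>F = f (b - 1)\<close>, a first shift sends \<open>q\<close> to a power \<open>b\<^sup>L'\<close>, so that \<open>f\<close> maps \<open>p, q\<close> to
  \<open>N = (L' - D) F + f (b\<^sup>D - D)\<close> and \<open>1\<close>.  A second shift sends \<open>1\<close> to \<open>b\<^sup>L - 1\<close>, of value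
  \<open>L F\<close>, and \<open>N\<close> to \<open>M b\<^sup>L\<close>; this needs a number \<open>M\<close> with \<open>f M = L F\<close> in a prescribed
  residue class modulo \<open>F\<close>.  It is assembled from blocks of length \<open>totient F\<close> ending in
  the digits \<open>1\<close> and \<open>m\<^sub>*\<close>, and its residue is adjusted through the number of
  \<open>m\<^sub>*\<close>-blocks, which is possible because \<open>f m\<^sub>* - m\<^sub>*\<close> is a unit modulo \<open>F\<close>.\<close>

fun repeat_block :: "nat \<Rightarrow> nat \<Rightarrow> nat \<Rightarrow> nat \<Rightarrow> nat" where
  "repeat_block B K e 0 = 0"
| "repeat_block B K e (Suc t) = repeat_block B K e t * B ^ K + e"

lemma repeat_block_less:
  assumes "e < B ^ K"
  shows "repeat_block B K e t < B ^ (K * t)"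
proof (induction t)
  case (Suc t)
  have "repeat_block B K e t * B ^ K + e < (repeat_block B K e t + 1) * B ^ K"
    using assms by simp
  also have "\<dots> \<le> B ^ (K * t) * B ^ K"
    using Suc by (intro mult_le_mono1) simp
  finally show ?case
    by (simp add: power_add mult.commute)
qed simp

lemma repeat_block_cong:
  assumes "[B ^ K = 1] (mod n)"
  shows "[repeat_block B K e t = t * e] (mod n)"
proof (induction t)
  case (Suc t)
  have "[repeat_block B K e t * B ^ K + e = t * e * 1 + e] (mod n)"
    using Suc assms by (intro cong_add cong_mult) auto
  then show ?case
    by (simp add: add.commute)
qed simp

lemma less_power_self:
  assumes "2 \<le> (b::nat)"
  shows "n < b ^ n"
proof -
  have "n < 2 ^ n"
    by simp
  also have "\<dots> \<le> b ^ n"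
    using assms by (simp add: power_mono)
  finally show ?thesis .
qed

lemma cong_solve_coprime_bounded:
  fixes a z :: int
  assumes "coprime a (int n)" "n > 0"
  obtains t where "t < n" "[a * int t = z] (mod int n)"
proof -
  obtain x where x: "[a * x = 1] (mod int n)"
    using cong_solve_coprime_int[OF assms(1)] by blast
  define t where "t = nat ((x * z) mod int n)"
  have t: "int t = (x * z) mod int n"
    using assms(2) by (simp add: t_def)
  then have "t < n"
    using assms(2) by (metis of_nat_0_less_iff of_nat_less_iff pos_mod_bound)
  have "[a * int t = a * x * z] (mod int n)"
    unfolding t by (simp add: cong_def mod_mult_right_eq mult.assoc)
  also have "[a * x * z = 1 * z] (mod int n)"
    using x by (intro cong_mult cong_refl)
  finally show thesis
    using that \<open>t < n\<close> by simp
qed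

declare digit_map.simps [simp del]

locale digit_map_base =
  fixes b :: nat and fs :: "nat \<Rightarrow> nat"
  assumes base_ge_2: "b \<ge> 2" and fs_0: "fs 0 = 0" and fs_1: "fs 1 = 1"
begin

abbreviation f :: "nat \<Rightarrow> nat" where
  "f \<equiv> digit_map b fs"

lemma f_0 [simp]: "f 0 = 0"
  by (subst digit_map.simps) simp

lemma f_eq: "f n = fs (n mod b) + f (n div b)"
  using base_ge_2 fs_0 by (cases "n = 0") (simp, subst digit_map.simps, auto)

lemma f_digit: "e < b \<Longrightarrow> f e = fs e"
  by (subst f_eq) simp

lemma f_1 [simp]: "f 1 = 1"
  using base_ge_2 fs_1 by (simp add: f_digit)

lemma f_mult_power_add: "y < b ^ L \<Longrightarrow> f (x * b ^ L + y) = f x + f y"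
proof (induction L arbitrary: x y)
  case (Suc L)
  have "y div b < b ^ L"
    using Suc.prems by (simp add: less_mult_imp_div_less mult.commute)
  moreover have "x * b ^ Suc L + y = y + (x * b ^ L) * b"
    by simp
  then have "(x * b ^ Suc L + y) div b = x * b ^ L + y div b"
    "(x * b ^ Suc L + y) mod b = y mod b"
    using base_ge_2 by (simp_all only:) simp_all
  ultimately show ?case
    using Suc.IH f_eq[of "x * b ^ Suc L + y"] f_eq[of y] by simp
qed simp

lemma f_mult_power: "f (x * b ^ L) = f x"
  using f_mult_power_add[of 0 L x] base_ge_2 by simp

lemma f_power: "f (b ^ L) = 1"
  by (metis f_1 f_mult_power mult_1)

lemma f_power_minus_1: "f (b ^ j - 1) = j * fs (b - 1)"
proof (induction j)
  case (Suc j)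
  have "b ^ Suc j - 1 = (b ^ j - 1) * b ^ 1 + (b - 1)"
    using base_ge_2 by (simp add: algebra_simps diff_mult_distrib)
  then show ?case
    using Suc base_ge_2 f_mult_power_add[of "b - 1" 1 "b ^ j - 1"] f_digit[of "b - 1"] by simp
qed simp

lemma f_power_minus:
  assumes "1 \<le> D" "D \<le> L"
  shows "f (b ^ L - D) = (L - D) * fs (b - 1) + f (b ^ D - D)"
proof -
  have "D < b ^ D"
    using base_ge_2 by (rule less_power_self)
  moreover have "b ^ L = (b ^ (L - D) - 1) * b ^ D + b ^ D"
    using assms base_ge_2 by (simp add: algebra_simps diff_mult_distrib power_add[symmetric])
  ultimately have "b ^ L - D = (b ^ (L - D) - 1) * b ^ D + (b ^ D - D)"
    by simp
  moreover have "b ^ D - D < b ^ D"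
    using assms \<open>D < b ^ D\<close> by simp
  ultimately show ?thesis
    using f_mult_power_add f_power_minus_1 by simp
qed

lemma base_le_power: "1 \<le> K \<Longrightarrow> b \<le> b ^ K"
  using base_ge_2 power_increasing[of 1 K b] by simp

lemma f_repeat_block:
  assumes "1 \<le> K" "e < b"
  shows "f (repeat_block b K e t) = t * fs e"
proof (induction t)
  case (Suc t)
  then show ?case
    using assms base_le_power[OF assms(1)] f_mult_power_add[of e K] f_digit by simp
qed simp

lemma exists_large_preimage:
  assumes "s > 0"
  obtains w where "w > v" "f w = s"
proof
  define X where "X = repeat_block b 1 1 s"
  have "f X = s"
    using f_repeat_block[of 1 1 s] base_ge_2 fs_1 by (simp add: X_def)
  then have "X \<ge> 1"
    using assms by (cases X) auto
  have "v < b ^ v"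
    using base_ge_2 by (rule less_power_self)
  also have "\<dots> \<le> X * b ^ v"
    using \<open>X \<ge> 1\<close> by simp
  finally show "v < X * b ^ v" .
  show "f (X * b ^ v) = s"
    using \<open>f X = s\<close> f_mult_power by simp
qed

lemma exists_value_in_residue_class:
  assumes "coprime b n" "m < b" "coprime (int (fs m) - int m) (int n)" "n * fs m \<le> s"
  obtains M where "f M = s" "[M = r] (mod n)"
proof -
  have "n > 0"
    using assms(1) base_ge_2 by (cases n) auto
  define K where "K = totient n"
  have "K \<ge> 1"
    using \<open>n > 0\<close> by (simp add: K_def Suc_le_eq)
  have b_K: "[b ^ K = 1] (mod n)"
    unfolding K_def using assms(1) by (rule euler_theorem)
  obtain t2 where "t2 < n" and t2_cong: "[(int (fs m) - int m) * int t2 = int s - int r] (mod int n)"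
    using cong_solve_coprime_bounded[OF assms(3) \<open>n > 0\<close>] by blast
  have "t2 * fs m \<le> s"
    using \<open>t2 < n\<close> assms(4) by (meson le_trans less_imp_le_nat mult_le_mono1)
  define t1 where "t1 = s - t2 * fs m"
  define M where "M = repeat_block b K 1 t1 * b ^ (K * t2) + repeat_block b K m t2"
  have "m < b ^ K"
    using assms(2) base_le_power[OF \<open>K \<ge> 1\<close>] by simp
  then have "f M = f (repeat_block b K 1 t1) + f (repeat_block b K m t2)"
    unfolding M_def by (intro f_mult_power_add repeat_block_less)
  also have "\<dots> = s"
    using f_repeat_block \<open>K \<ge> 1\<close> assms(2) base_ge_2 fs_1 \<open>t2 * fs m \<le> s\<close> by (simp add: t1_def)
  finally have "f M = s" .
  have "[b ^ (K * t2) = 1] (mod n)"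
    using cong_pow[OF b_K, of t2] by (simp add: power_mult)
  then have "[M = t1 * 1 * 1 + t2 * m] (mod n)"
    unfolding M_def by (intro cong_add cong_mult repeat_block_cong b_K)
  then have "[int M = int t1 + int t2 * int m] (mod int n)"
    by (simp flip: cong_int_iff)
  moreover have "int t1 + int t2 * int m = int s - (int (fs m) - int m) * int t2"
    using \<open>t2 * fs m \<le> s\<close> by (simp add: t1_def of_nat_diff algebra_simps)
  ultimately have "[int M = int s - (int s - int r)] (mod int n)"
    using t2_cong by (metis cong_diff cong_refl cong_trans)
  then have "[M = r] (mod n)"
    by (simp flip: cong_int_iff)
  with \<open>f M = s\<close> that show thesis
    by blast
qed

lemma exists_merge_with_1:
  assumes coprime_F: "coprime b (fs (b - 1))" and "m < b"
    and coprime_m: "coprime (int (fs m) - int m) (int (fs (b - 1)))"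
  obtains N d where "[N = c] (mod fs (b - 1))" "B < N" "f (N + d) = f (1 + d)"
proof -
  define F where "F = fs (b - 1)"
  have "F > 0"
    using coprime_F base_ge_2 by (cases F) (auto simp: F_def)
  define L where "L = totient F * (B + fs m + 2)"
  have "[b ^ L = 1] (mod F)"
    unfolding L_def power_mult
    using cong_pow[OF euler_theorem[OF coprime_F[folded F_def]]] by (simp only: power_one)
  have "1 \<le> totient F"
    using \<open>F > 0\<close> by (simp add: Suc_le_eq)
  then have "B + fs m + 2 \<le> L"
    unfolding L_def by (metis mult_1 mult_le_mono1)
  then have "F * fs m \<le> L * F"
    by simp
  then obtain M where f_M: "f M = L * F" and M: "[M = c + F - 1] (mod F)"
    using exists_value_in_residue_class[OF coprime_F[folded F_def] \<open>m < b\<close> coprime_m[folded F_def]]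
    by blast
  have "L \<le> L * F"
    using \<open>F > 0\<close> by simp
  then have "2 \<le> f M"
    using f_M \<open>B + fs m + 2 \<le> L\<close> by linarith
  have "M \<ge> 2"
  proof (rule ccontr)
    assume "\<not> M \<ge> 2"
    then have "M = 0 \<or> M = 1"
      by linarith
    then show False
      using \<open>2 \<le> f M\<close> f_1 by (elim disjE) simp_all
  qed
  define N where "N = (M - 1) * b ^ L + 2"
  have "[N = (M - 1) * 1 + 2] (mod F)"
    unfolding N_def using \<open>[b ^ L = 1] (mod F)\<close> by (intro cong_add cong_mult cong_refl)
  also have "(M - 1) * 1 + 2 = M + 1"
    using \<open>M \<ge> 2\<close> by simp
  also have "[M + 1 = c + F] (mod F)"
    using cong_add[OF M cong_refl[of 1]] \<open>F > 0\<close> by simp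
  also have "[c + F = c] (mod F)"
    by (simp add: cong_def)
  finally have "[N = c] (mod F)" .
  have "L < b ^ L"
    using base_ge_2 by (rule less_power_self)
  also have "\<dots> \<le> (M - 1) * b ^ L"
    using \<open>M \<ge> 2\<close> mult_le_mono1[of 1 "M - 1" "b ^ L"] by linarith
  finally have "B < N" "2 \<le> b ^ L"
    using \<open>B + fs m + 2 \<le> L\<close> \<open>L < b ^ L\<close> by (simp_all add: N_def)
  have "(M - 1) * b ^ L + b ^ L = M * b ^ L"
    using \<open>M \<ge> 2\<close> by (metis Suc_diff_1 add.commute mult_Suc less_le_trans pos2)
  then have "f (N + (b ^ L - 2)) = f (M * b ^ L)"
    using \<open>2 \<le> b ^ L\<close> N_def by (metis add_diff_inverse_nat add.assoc not_less)
  also have "\<dots> = f (b ^ L - 1)"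
    using f_M f_mult_power f_power_minus_1 by (simp add: F_def)
  also have "b ^ L - 1 = 1 + (b ^ L - 2)"
    using \<open>2 \<le> b ^ L\<close> by simp
  finally show thesis
    using that \<open>[N = c] (mod F)\<close> \<open>B < N\<close> by (simp add: F_def)
qed

lemma shift_maps_merge:
  assumes "coprime b (fs (b - 1))" and "m < b"
    and "coprime (int (fs m) - int m) (int (fs (b - 1)))" and "p < q"
  obtains d1 d2 where "f (f (p + d1) + d2) = f (f (q + d1) + d2)"
proof -
  define D where "D = q - p"
  define c where "c = f (b ^ D - D)"
  obtain N d2 where "[N = c] (mod fs (b - 1))" "fs (b - 1) * p + c < N"
    and merge: "f (N + d2) = f (1 + d2)"
    using exists_merge_with_1[OF assms(1-3)] by blast
  then obtain k where k: "N = k * fs (b - 1) + c"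
    using cong_le_nat[of c N] by auto
  then have "p \<le> k"
    using \<open>fs (b - 1) * p + c < N\<close> by (simp add: mult.commute)
  define d1 where "d1 = b ^ (D + k) - q"
  have "q < b ^ (D + k)"
    using \<open>p \<le> k\<close> less_power_self[OF base_ge_2, of "D + k"] by (simp add: D_def)
  then have "q + d1 = b ^ (D + k)" "p + d1 = b ^ (D + k) - D"
    using \<open>p < q\<close> D_def d1_def by simp_all
  then have "f (q + d1) = 1" "f (p + d1) = N"
    using f_power f_power_minus[of D "D + k"] \<open>p < q\<close> by (simp_all add: D_def c_def k)
  then show thesis
    using that[of d1 d2] merge by (simp only:)
qed

definition has_u_translate :: "nat \<Rightarrow> nat set \<Rightarrow> bool" where
  "has_u_translate u C \<longleftrightarrow> (\<exists>y>0. \<forall>c\<in>C. u_integer f u (y + c))"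

lemma has_u_translate_shift:
  assumes "finite C" and "has_u_translate u ((\<lambda>x. f (x + d)) ` C)"
  shows "has_u_translate u C"
proof -
  obtain y' where "y' > 0" and y': "\<forall>c\<in>C. u_integer f u (y' + f (c + d))"
    using assms(2) by (auto simp: has_u_translate_def)
  obtain X where "X > 0" "f X = y'"
    using exists_large_preimage[OF \<open>y' > 0\<close>] by blast
  define L where "L = Max (insert 0 C) + d"
  define y where "y = X * b ^ L + d"
  have "y > 0"
    using \<open>X > 0\<close> base_ge_2 by (simp add: y_def)
  have "u_integer f u (y + c)" if c: "c \<in> C" for c
  proof -
    have "c \<le> Max (insert 0 C)"
      using \<open>finite C\<close> c by simp
    then have "c + d < b ^ L"
      using less_power_self[OF base_ge_2, of L] by (simp add: L_def)
    have "y + c = X * b ^ L + (c + d)"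
      by (simp add: y_def)
    then have "f (y + c) = f X + f (c + d)"
      using f_mult_power_add[OF \<open>c + d < b ^ L\<close>] by (simp only:)
    then have "f (y + c) = y' + f (c + d)"
      using \<open>f X = y'\<close> by (simp only:)
    moreover obtain r where "r \<ge> 1" "(f ^^ r) (y' + f (c + d)) = u"
      using y' c by (auto simp: u_integer_def)
    ultimately have "(f ^^ Suc r) (y + c) = u"
      by (simp add: funpow_Suc_right del: funpow.simps)
    then show ?thesis
      unfolding u_integer_def using \<open>y > 0\<close> by (intro conjI exI[of _ "Suc r"]) auto
  qed
  then show ?thesis
    unfolding has_u_translate_def using \<open>y > 0\<close> by blast
qed

lemma has_u_translate_subset_singleton:
  assumes "u > 0" and "C \<subseteq> {v}"
  shows "has_u_translate u C"
proof -
  obtain w where "w > v" "f w = u"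
    using exists_large_preimage[OF assms(1)] by blast
  then have "u_integer f u (w - v + v)"
    by (auto simp: u_integer_def intro: exI[of _ 1])
  then show ?thesis
    using assms(2) \<open>w > v\<close> unfolding has_u_translate_def by (intro exI[of _ "w - v"]) auto
qed

lemma has_u_translate_finite:
  assumes "coprime b (fs (b - 1))" "m < b" "coprime (int (fs m) - int m) (int (fs (b - 1)))"
    and "u > 0" and "finite C"
  shows "has_u_translate u C"
  using \<open>finite C\<close>
proof (induction "card C" arbitrary: C rule: less_induct)
  case less
  show ?case
  proof (cases "\<exists>p\<in>C. \<exists>q\<in>C. p < q")
    case False
    have "C \<subseteq> {Max C}"
    proof
      fix x
      assume "x \<in> C"
      then have "Max C \<in> C" "x \<le> Max C"
        using Max_in[OF less.prems] Max_ge[OF less.prems] by auto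
      moreover have "\<not> x < Max C"
        using False \<open>x \<in> C\<close> \<open>Max C \<in> C\<close> by blast
      ultimately show "x \<in> {Max C}"
        by simp
    qed
    then show ?thesis
      by (rule has_u_translate_subset_singleton[OF \<open>u > 0\<close>])
  next
    case True
    then obtain p q where "p \<in> C" "q \<in> C" "p < q"
      by blast
    then obtain d1 d2 where merge: "f (f (p + d1) + d2) = f (f (q + d1) + d2)"
      using shift_maps_merge assms(1-3) by blast
    define g where "g x = f (f (x + d1) + d2)" for x
    have "\<not> inj_on g C"
      using merge \<open>p \<in> C\<close> \<open>q \<in> C\<close> \<open>p < q\<close> by (auto simp: g_def inj_on_def)
    then have "card (g ` C) < card C"
      using less.prems card_image_le inj_on_iff_eq_card le_neq_implies_less by blast
    then have "has_u_translate u (g ` C)"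
      using less.hyps less.prems by blast
    then have "has_u_translate u ((\<lambda>x. f (x + d2)) ` (\<lambda>x. f (x + d1)) ` C)"
      by (simp add: image_image g_def)
    then have "has_u_translate u ((\<lambda>x. f (x + d1)) ` C)"
      using finite_imageI[OF less.prems] by (rule has_u_translate_shift[rotated])
    then show ?thesis
      using less.prems by (rule has_u_translate_shift[rotated])
  qed
qed

end

theorem theorem1p1:
  fixes b :: nat and fs :: "nat \<Rightarrow> nat" and u n :: nat
  assumes hb: "b \<ge> 2"
    and h0: "fs 0 = 0" and h1: "fs 1 = 1"
    and hgcd: "coprime b (fs (b - 1))"
    and hm: "\<exists>m<b. coprime (int (digit_map b fs m) - int m) (int (digit_map b fs (b - 1)))"
    and hu: "cycle_number (digit_map b fs) u"
    and hn: "n > 0"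
  shows "\<exists>k>0. \<forall>i<n. u_integer (digit_map b fs) u (k + i)"
proof -
  interpret digit_map_base b fs
    using hb h0 h1 by unfold_locales
  obtain m where "m < b" "coprime (int (fs m) - int m) (int (fs (b - 1)))"
    using hm hb f_digit by fastforce
  moreover have "u > 0"
    using hu by (simp add: cycle_number_def)
  ultimately have "has_u_translate u {0..<n}"
    using hgcd by (intro has_u_translate_finite) auto
  then show ?thesis
    by (auto simp: has_u_translate_def)
qed

end
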